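(* Let $\mathbf{J}\in\mathbb{R}^{n\times p}$, $\mathbf{J}_1\in\mathbb{R}^{n\times q_1}$, $\mathbf{J}_2\in\mathbb{R}^{n\times q_2}$, $\mathbf{K}=\mathbf{J}\mathbf{J}^{\top}$ positive definite, $\mathbf{S}_l=\mathbf{J}_l\mathbf{J}_l^{\top}$ for $l\in\{1,2\}$, $\sigma>0$, and $\mathbf{Y}\in\mathbb{R}^n\setminus\{0\}$. For $l\in\{1,2\}$ define $\mathcal{R}(\boldsymbol{\theta}\cup\hat{\boldsymbol{\theta}}^l)=\|\mathbf{Y}-(\mathbf{K}+\mathbf{S}_l)(\mathbf{K}+\mathbf{S}_l+\sigma\mathbf{I})^{-1}\mathbf{Y}\|^2$, $\eta_l=\|\mathbf{K}^{-1/2}\mathbf{S}_l\mathbf{K}^{-1/2}\|$, and assume $\eta_l<1$. If $\kappa(\mathbf{K}+\sigma\mathbf{I})\le c$, then with $a_l=\frac{c}{(1-\eta_l)^2}$ and $b=a_1a_2$, $$\frac{\lambda_{\max}(\mathbf{K}+\mathbf{S}_1+\sigma\mathbf{I})}{b\,\lambda_{\max}(\mathbf{K}+\mathbf{S}_2+\sigma\mathbf{I})}\le\left(\frac{\mathcal{R}(\boldsymbol{\theta}\cup\hat{\boldsymbol{\theta}}^1)}{\mathcal{R}(\boldsymbol{\theta}\cup\hat{\boldsymbol{\theta}}^2)}\right)^{1/2}\le\frac{b\,\lambda_{\max}(\mathbf{K}+\mathbf{S}_1+\sigma\mathbf{I})}{\lambda_{\max}(\mathbf{K}+\mathbf{S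}_2+\sigma\mathbf{I})}.$$
   Context: $\kappa(\mathbf{A})=\lambda_{\max}(\mathbf{A})/\lambda_{\min}(\mathbf{A})$ is the condition number; matrix norms are spectral norms. In the application, $\mathbf{K}$ is the neural tangent kernel on training inputs induced by the currently trainable parameters $\boldsymbol{\theta}$, and $\mathbf{S}_l$ is the kernel induced by candidate layer parameters $\hat{\boldsymbol{\theta}}^l$, $[\mathbf{S}_l]_{ij}=\nabla_{\hat{\boldsymbol{\theta}}^l}f(\mathbf{x}_i)\nabla_{\hat{\boldsymbol{\theta}}^l}f(\mathbf{x}_j)^{\top}$; $\mathcal{R}(\boldsymbol{\theta}\cup\hat{\boldsymbol{\theta}}^l)$ is the training squared residual of NTK kernel ridge regression with regularization $\sigma$ using kernel $\mathbf{K}+\mathbf{S}_l$. *)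

theory Defs
  imports "HOL-Analysis.Analysis"
begin

definition eigenvalues :: "real^'n^'n \<Rightarrow> real set" where
  "eigenvalues A = {e. \<exists>v. v \<noteq> 0 \<and> A *v v = e *\<^sub>R v}"

definition lambda_max :: "real^'n^'n \<Rightarrow> real" where
  "lambda_max A = Max (eigenvalues A)"

definition lambda_min :: "real^'n^'n \<Rightarrow> real" where
  "lambda_min A = Min (eigenvalues A)"

definition cond_num :: "real^'n^'n \<Rightarrow> real" where
  "cond_num A = lambda_max A / lambda_min A"

definition pos_def :: "real^'n^'n \<Rightarrow> bool" where
  "pos_def A \<longleftrightarrow> transpose A = A \<and> (\<forall>x. x \<noteq> 0 \<longrightarrow> x \<bullet> (A *v x) > 0)"

definition pos_semidef :: "real^'n^'n \<Rightarrow> bool" where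
  "pos_semidef A \<longleftrightarrow> transpose A = A \<and> (\<forall>x. x \<bullet> (A *v x) \<ge> 0)"

definition mat_sqrt :: "real^'n^'n \<Rightarrow> real^'n^'n" where
  "mat_sqrt A = (THE M. pos_semidef M \<and> M ** M = A)"

definition inv_sqrt :: "real^'n^'n \<Rightarrow> real^'n^'n" where
  "inv_sqrt A = matrix_inv (mat_sqrt A)"

definition spec_norm :: "real^'n^'m \<Rightarrow> real" where
  "spec_norm A = onorm (\<lambda>x. A *v x)"

text \<open>Training squared residual of kernel ridge regression with kernel KS, ridge sigma.\<close>
definition residual :: "real^'n^'n \<Rightarrow> real \<Rightarrow> real^'n \<Rightarrow> real" where
  "residual KS \<sigma> Y = (norm (Y - (KS ** matrix_inv (KS + \<sigma> *\<^sub>R mat 1)) *v Y))\<^sup>2"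

end

theory Submission
  imports Defs
begin

text \<open>
  Put A_l = K + S_l + \<sigma> I and u_l = A_l^-1 Y. Since Y - (K + S_l) u_l = \<sigma> u_l, the residual
  is \<sigma>^2 |u_l|^2, so sqrt (R1 / R2) = |u1| / |u2| \<le> \<lambda>max(A2) / \<lambda>min(A1).
  Comparing quadratic forms gives \<lambda>min(K + \<sigma> I) \<le> \<lambda>min(A1) \<le> \<lambda>max(A1) and, because
  x S2 x \<le> \<eta>2 x K x (substitute x = K^-1/2 y), \<lambda>max(A2) \<le> (1 + \<eta>2) \<lambda>max(K + \<sigma> I)
  \<le> (1 + \<eta>2) c \<lambda>min(K + \<sigma> I). Together these bound \<lambda>max(A2)^2 by b \<lambda>min(A1) \<lambda>max(A1),
  which is the upper estimate; the lower one is the upper one with the layers exchanged.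
  The Rayleigh characterisation of \<lambda>max and \<lambda>min and the square root K^1/2 rest on the
  spectral theorem for real symmetric matrices, obtained by maximising the Rayleigh quotient
  on the unit sphere of an invariant subspace and inducting on its dimension.
\<close>

section \<open>Symmetric matrices\<close>

lemma inner_symmetric_matrix:
  fixes A :: "real^'n^'n"
  assumes "transpose A = A"
  shows "x \<bullet> (A *v y) = (A *v x) \<bullet> y"
  by (metis assms dot_lmul_matrix transpose_matrix_vector)

lemma symmetric_if_inner_symmetric:
  fixes A :: "real^'n^'n"
  assumes "\<And>x y. x \<bullet> (A *v y) = (A *v x) \<bullet> y"
  shows "transpose A = A"
proof -
  have "transpose A *v x = A *v x" for x
  proof (rule vector_eq_dot_span[of _ UNIV])
    show "i \<bullet> (transpose A *v x) = i \<bullet> (A *v x)" for i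
      by (metis assms inner_commute dot_lmul_matrix transpose_matrix_vector)
  qed simp_all
  then show ?thesis by (simp add: matrix_eq)
qed

lemma transpose_add: "transpose (A + B) = transpose A + transpose (B :: 'a::semiring_1^'n^'m)"
  by (simp add: transpose_def vec_eq_iff)

lemma scaleR_mat_one_mult: "(c *\<^sub>R mat 1) *v x = c *\<^sub>R (x :: real^'n)"
  by (metis matrix_vector_mul_lid scaleR_matrix_vector_assoc)

lemma quadratic_form_add: "x \<bullet> ((A + B) *v x) = x \<bullet> (A *v x) + x \<bullet> (B *v (x :: real^'n))"
  by (simp add: matrix_vector_mult_add_rdistrib inner_add_right)

lemma matrix_inv_inverse:
  fixes A :: "real^'n^'n"
  assumes "invertible A"
  shows matrix_inv_right: "A ** matrix_inv A = mat 1"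
    and matrix_inv_left: "matrix_inv A ** A = mat 1"
proof -
  have "A ** matrix_inv A = mat 1 \<and> matrix_inv A ** A = mat 1"
    using assms unfolding invertible_def matrix_inv_def by (rule someI_ex)
  then show "A ** matrix_inv A = mat 1" "matrix_inv A ** A = mat 1" by auto
qed

lemma symmetric_matrix_inv:
  fixes A :: "real^'n^'n"
  assumes "invertible A" and "transpose A = A"
  shows "transpose (matrix_inv A) = matrix_inv A"
proof -
  have "transpose (matrix_inv A) ** A = transpose (A ** matrix_inv A)"
    using matrix_transpose_mul[of A "matrix_inv A"] assms(2) by simp
  also have "\<dots> = mat 1" by (simp add: matrix_inv_right[OF assms(1)])
  finally have "transpose (matrix_inv A) ** A = mat 1" .
  then have "transpose (matrix_inv A) = transpose (matrix_inv A) ** (A ** matrix_inv A)"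
    using matrix_inv_right[OF assms(1)] by simp
  also have "\<dots> = matrix_inv A"
    by (simp add: matrix_mul_assoc \<open>transpose (matrix_inv A) ** A = mat 1\<close>)
  finally show ?thesis .
qed

section \<open>The spectral theorem\<close>

lemma coefficient_zero_if_quadratic_nonpos:
  fixes a b :: real
  assumes "\<And>t. 2 * t * a + t\<^sup>2 * b \<le> 0"
  shows "a = 0"
proof (rule ccontr)
  assume "a \<noteq> 0"
  define s where "s = \<bar>b\<bar> + 1"
  have "s > 0" and "2 * s + b > 0" unfolding s_def by auto
  have "2 * (a / s) * a + (a / s)\<^sup>2 * b = a\<^sup>2 * (2 * s + b) / s\<^sup>2"
    using \<open>s > 0\<close> by (simp add: field_simps power2_eq_square)
  also have "\<dots> > 0"
    using \<open>a \<noteq> 0\<close> \<open>s > 0\<close> \<open>2 * s + b > 0\<close> by simp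
  finally show False using assms[of "a / s"] by linarith
qed

lemma symmetric_rayleigh_max_is_eigenvector:
  fixes A :: "real^'n^'n"
  assumes sym: "transpose A = A" and W: "subspace W" and invariant: "\<And>x. x \<in> W \<Longrightarrow> A *v x \<in> W"
    and "v \<in> W" and vv: "v \<bullet> v = 1"
    and rayleigh: "\<And>u. u \<in> W \<Longrightarrow> u \<bullet> (A *v u) \<le> (v \<bullet> (A *v v)) * (u \<bullet> u)"
  shows "A *v v = (v \<bullet> (A *v v)) *\<^sub>R v"
proof -
  define l where "l = v \<bullet> (A *v v)"
  \<comment> \<open>The Rayleigh inequality at v + t y, for the residual y = A v - l v, reads
    2 t |y|^2 + O(t^2) \<le> 0 for all t, which forces y = 0.\<close>
  define y where "y = A *v v - l *\<^sub>R v"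
  have "y \<in> W" unfolding y_def using W invariant \<open>v \<in> W\<close> by (simp add: subspace_diff subspace_scale)
  have vy: "v \<bullet> y = 0" unfolding y_def l_def by (simp add: inner_diff_right vv)
  have "2 * t * (y \<bullet> y) + t\<^sup>2 * (y \<bullet> (A *v y) - l * (y \<bullet> y)) \<le> 0" for t
  proof -
    have "(v + t *\<^sub>R y) \<bullet> (A *v (v + t *\<^sub>R y)) \<le> l * ((v + t *\<^sub>R y) \<bullet> (v + t *\<^sub>R y))"
      unfolding l_def using rayleigh W \<open>v \<in> W\<close> \<open>y \<in> W\<close> by (simp add: subspace_add subspace_scale)
    moreover have "v \<bullet> (A *v y) = y \<bullet> (A *v v)"
      using inner_symmetric_matrix[OF sym, of v y] by (simp add: inner_commute)
    moreover have "y \<bullet> (A *v v) = y \<bullet> y + l * (y \<bullet> v)"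
      unfolding y_def by (simp add: inner_diff_left inner_diff_right algebra_simps)
    ultimately show ?thesis
      using vv vy unfolding l_def
      by (simp add: matrix_vector_right_distrib matrix_vector_mult_scaleR inner_add_left
          inner_add_right power2_eq_square inner_commute algebra_simps)
  qed
  then have "y \<bullet> y = 0" by (rule coefficient_zero_if_quadratic_nonpos)
  then have "A *v v = l *\<^sub>R v" by (simp add: y_def)
  then show ?thesis unfolding l_def .
qed

lemma symmetric_eigenvector_in_invariant_subspace:
  fixes A :: "real^'n^'n"
  assumes sym: "transpose A = A" and W: "subspace W" "W \<noteq> {0}"
    and invariant: "\<And>x. x \<in> W \<Longrightarrow> A *v x \<in> W"
  obtains v l where "v \<in> W" "norm v = 1" "A *v v = l *\<^sub>R v"
proof -
  define S where "S = W \<inter> sphere 0 1"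
  have "compact S"
    unfolding S_def using compact_Int_closed[OF compact_sphere closed_subspace[OF W(1)]]
    by (simp add: Int_commute)
  obtain x0 where "x0 \<in> W" "x0 \<noteq> 0" using W subspace_0 by blast
  then have "x0 /\<^sub>R norm x0 \<in> S" unfolding S_def using W(1) by (simp add: subspace_scale)
  then have "S \<noteq> {}" by auto
  have "continuous_on S (\<lambda>v. v \<bullet> (A *v v))"
    by (intro continuous_intros linear_continuous_on matrix_vector_mul_bounded_linear)
  then obtain v where v: "v \<in> S" and v_max: "\<And>u. u \<in> S \<Longrightarrow> u \<bullet> (A *v u) \<le> v \<bullet> (A *v v)"
    using continuous_attains_sup[OF \<open>compact S\<close> \<open>S \<noteq> {}\<close>] by blast
  have "v \<in> W" "norm v = 1" using v unfolding S_def by auto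
  have "A *v v = (v \<bullet> (A *v v)) *\<^sub>R v"
  proof (rule symmetric_rayleigh_max_is_eigenvector[OF sym W(1) invariant \<open>v \<in> W\<close>])
    show "v \<bullet> v = 1" using \<open>norm v = 1\<close> by (simp add: dot_square_norm)
    show "u \<bullet> (A *v u) \<le> (v \<bullet> (A *v v)) * (u \<bullet> u)" if "u \<in> W" for u
    proof (cases "u = 0")
      case False
      then have "u /\<^sub>R norm u \<in> S" unfolding S_def using that W(1) by (simp add: subspace_scale)
      then have "(u \<bullet> (A *v u)) / (norm u)\<^sup>2 \<le> v \<bullet> (A *v v)"
        using v_max by (fastforce simp: matrix_vector_mult_scaleR power2_eq_square divide_inverse mult_ac)
      then show ?thesis using False by (simp add: pos_divide_le_eq dot_square_norm)
    qed simp
  qed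
  then show ?thesis using that \<open>v \<in> W\<close> \<open>norm v = 1\<close> by blast
qed

lemma subspace_subset_span_insert_orthogonal:
  assumes "subspace W" "v \<in> W" "v \<bullet> v = 1" and "W \<inter> {x. v \<bullet> x = 0} \<subseteq> span B"
  shows "W \<subseteq> span (insert v B)"
proof
  fix x assume "x \<in> W"
  then have "x - (v \<bullet> x) *\<^sub>R v \<in> W \<inter> {x. v \<bullet> x = 0}"
    using assms(1-3) by (simp add: subspace_diff subspace_scale inner_diff_right)
  then have "x - (v \<bullet> x) *\<^sub>R v \<in> span (insert v B)"
    using assms(4) span_mono[of B "insert v B"] by blast
  then show "x \<in> span (insert v B)"
    by (metis diff_add_cancel insertI1 span_add span_base span_scale)
qed

lemma symmetric_orthonormal_eigenvectors_span_invariant_subspace: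
  fixes A :: "real^'n^'n"
  assumes sym: "transpose A = A"
  shows "subspace W \<Longrightarrow> (\<And>x. x \<in> W \<Longrightarrow> A *v x \<in> W) \<Longrightarrow>
    \<exists>B. B \<subseteq> W \<and> pairwise orthogonal B \<and> (\<forall>v\<in>B. norm v = 1 \<and> (\<exists>l. A *v v = l *\<^sub>R v))
      \<and> W \<subseteq> span B"
proof (induction "dim W" arbitrary: W rule: less_induct)
  case less
  show ?case
  proof (cases "W = {0}")
    case True
    then show ?thesis by (intro exI[of _ "{}"]) auto
  next
    case False
    obtain v l where "v \<in> W" "norm v = 1" and eigen: "A *v v = l *\<^sub>R v"
      using symmetric_eigenvector_in_invariant_subspace[OF sym less.prems(1) False less.prems(2)] .
    have vv: "v \<bullet> v = 1" using \<open>norm v = 1\<close> by (simp add: dot_square_norm)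
    define W' where "W' = W \<inter> {x. v \<bullet> x = 0}"
    have "subspace W'"
      unfolding W'_def using less.prems(1) subspace_orthogonal_to_vector[of v]
      by (intro subspace_inter) (simp_all add: orthogonal_def)
    have invariant': "A *v x \<in> W'" if "x \<in> W'" for x
    proof -
      have "v \<bullet> (A *v x) = l * (v \<bullet> x)"
        by (simp add: inner_symmetric_matrix[OF sym] eigen)
      then show ?thesis using that less.prems(2) unfolding W'_def by auto
    qed
    have "dim W' < dim W"
    proof -
      have "v \<notin> W'" using vv unfolding W'_def by simp
      then have "W' \<subset> W" using \<open>v \<in> W\<close> unfolding W'_def by blast
      then show ?thesis
        using dim_psubset[of W' W] less.prems(1) \<open>subspace W'\<close> by (simp add: span_eq_iff[THEN iffD2])
    qed
    obtain B' where B': "B' \<subseteq> W'" "pairwise orthogonal B'"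
        "\<forall>u\<in>B'. norm u = 1 \<and> (\<exists>l. A *v u = l *\<^sub>R u)" "W' \<subseteq> span B'"
      using less.hyps[OF \<open>dim W' < dim W\<close> \<open>subspace W'\<close> invariant'] by blast
    have "insert v B' \<subseteq> W" using B'(1) \<open>v \<in> W\<close> unfolding W'_def by auto
    moreover have "W \<subseteq> span (insert v B')"
      using subspace_subset_span_insert_orthogonal less.prems(1) \<open>v \<in> W\<close> vv B'(4)
      unfolding W'_def by blast
    moreover have "pairwise orthogonal (insert v B')"
      using B'(1,2) unfolding W'_def by (auto simp: pairwise_insert orthogonal_def inner_commute)
    ultimately show ?thesis using B'(3) \<open>norm v = 1\<close> eigen
      by (intro exI[of _ "insert v B'"]) auto
  qed
qed

locale orthonormal_eigenbasis =
  fixes A :: "real^'n^'n" and B :: "(real^'n) set" and eigval :: "real^'n \<Rightarrow> real"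
  assumes orthogonal: "pairwise orthogonal B"
    and unit: "\<And>v. v \<in> B \<Longrightarrow> norm v = 1"
    and eigen: "\<And>v. v \<in> B \<Longrightarrow> A *v v = eigval v *\<^sub>R v"
    and spanning: "span B = UNIV"
begin

lemma finite: "finite B"
  using orthogonal by (rule pairwise_orthogonal_imp_finite)

lemma nonempty: "B \<noteq> {}"
proof
  assume "B = {}"
  then have "axis undefined 1 = (0 :: real^'n)" using spanning by (metis UNIV_I span_empty singletonD)
  then show False by (simp add: axis_eq_0_iff)
qed

lemma expand: "x = (\<Sum>v\<in>B. (x \<bullet> v) *\<^sub>R v)"
  using orthonormal_basis_expand[OF orthogonal unit _ finite] spanning by simp

lemma inner_basis: "w \<in> B \<Longrightarrow> v \<in> B \<Longrightarrow> w \<bullet> v = (if v = w then 1 else 0)"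
  using orthogonal unit by (force simp: norm_eq_1 orthogonal_def pairwise_def)

lemma inner_sum: "w \<in> B \<Longrightarrow> w \<bullet> (\<Sum>v\<in>B. f v *\<^sub>R v) = f w"
proof -
  assume "w \<in> B"
  have "w \<bullet> (\<Sum>v\<in>B. f v *\<^sub>R v) = (\<Sum>v\<in>B. if v = w then f v else 0)"
    by (auto simp: inner_sum_right inner_basis \<open>w \<in> B\<close> intro: sum.cong)
  then show ?thesis using finite \<open>w \<in> B\<close> by (simp add: sum.delta')
qed

lemma eigval_eq: "v \<in> B \<Longrightarrow> eigval v = v \<bullet> (A *v v)"
  using inner_basis[of v v] by (simp add: eigen)

lemma mult_expand: "A *v x = (\<Sum>v\<in>B. (eigval v * (x \<bullet> v)) *\<^sub>R v)"
proof -
  have "A *v x = A *v (\<Sum>v\<in>B. (x \<bullet> v) *\<^sub>R v)"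
    by (rule arg_cong[OF expand])
  also have "\<dots> = (\<Sum>v\<in>B. (x \<bullet> v) *\<^sub>R (A *v v))"
    by (simp add: linear_sum[OF matrix_vector_mul_linear] o_def matrix_vector_mult_scaleR)
  also have "\<dots> = (\<Sum>v\<in>B. (eigval v * (x \<bullet> v)) *\<^sub>R v)"
    by (intro sum.cong) (simp_all add: eigen)
  finally show ?thesis .
qed

lemma inner_expand: "x \<bullet> y = (\<Sum>v\<in>B. (x \<bullet> v) * (y \<bullet> v))"
proof -
  have "x \<bullet> y = (\<Sum>v\<in>B. (x \<bullet> v) *\<^sub>R v) \<bullet> y"
    by (rule arg_cong[where f = "\<lambda>z. z \<bullet> y", OF expand])
  also have "\<dots> = (\<Sum>v\<in>B. (x \<bullet> v) * (v \<bullet> y))"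
    by (simp add: inner_sum_left)
  finally show ?thesis by (simp add: inner_commute)
qed

lemma inner_mult_basis: "w \<in> B \<Longrightarrow> (A *v x) \<bullet> w = eigval w * (x \<bullet> w)"
  unfolding mult_expand[of x] by (simp add: inner_commute inner_sum)

lemma quadratic_form_expand: "x \<bullet> (A *v x) = (\<Sum>v\<in>B. eigval v * (x \<bullet> v)\<^sup>2)"
  by (subst inner_expand) (simp add: inner_mult_basis power2_eq_square mult_ac)

lemma norm_mult_expand: "(norm (A *v x))\<^sup>2 = (\<Sum>v\<in>B. (eigval v)\<^sup>2 * (x \<bullet> v)\<^sup>2)"
  unfolding power2_norm_eq_inner inner_expand[of "A *v x" "A *v x"]
  by (simp add: inner_mult_basis power2_eq_square mult_ac)

lemma norm_expand: "(norm x)\<^sup>2 = (\<Sum>v\<in>B. (x \<bullet> v)\<^sup>2)"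
  unfolding power2_norm_eq_inner inner_expand[of x x] by (simp add: power2_eq_square)

lemma eigenvalues_eq: "eigenvalues A = eigval ` B"
proof
  show "eigval ` B \<subseteq> eigenvalues A"
  proof (rule image_subsetI)
    fix v assume "v \<in> B"
    then have "v \<noteq> 0" using unit by force
    then show "eigval v \<in> eigenvalues A" unfolding eigenvalues_def using eigen[OF \<open>v \<in> B\<close>] by blast
  qed
  show "eigenvalues A \<subseteq> eigval ` B"
  proof
    fix e assume "e \<in> eigenvalues A"
    then obtain u where "u \<noteq> 0" and u: "A *v u = e *\<^sub>R u" unfolding eigenvalues_def by blast
    have "\<exists>v\<in>B. u \<bullet> v \<noteq> 0"
    proof (rule ccontr)
      assume "\<not> (\<exists>v\<in>B. u \<bullet> v \<noteq> 0)"
      then have "(\<Sum>v\<in>B. (u \<bullet> v) *\<^sub>R v) = 0" by simp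
      then show False using expand[of u] \<open>u \<noteq> 0\<close> by simp
    qed
    then obtain v where "v \<in> B" "u \<bullet> v \<noteq> 0" by blast
    moreover have "e * (u \<bullet> v) = eigval v * (u \<bullet> v)"
      using inner_mult_basis[OF \<open>v \<in> B\<close>, of u] u by simp
    ultimately show "e \<in> eigval ` B" by auto
  qed
qed

lemma lambda_max_eq: "lambda_max A = Max (eigval ` B)"
  by (simp add: lambda_max_def eigenvalues_eq)

lemma lambda_min_eq: "lambda_min A = Min (eigval ` B)"
  by (simp add: lambda_min_def eigenvalues_eq)

lemma eigval_le_lambda_max: "v \<in> B \<Longrightarrow> eigval v \<le> lambda_max A"
  by (simp add: lambda_max_eq finite)

lemma lambda_min_le_eigval: "v \<in> B \<Longrightarrow> lambda_min A \<le> eigval v"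
  by (simp add: lambda_min_eq finite)

lemma lambda_max_mem: "lambda_max A \<in> eigval ` B"
  unfolding lambda_max_eq using finite nonempty by (intro Max_in) auto

lemma lambda_min_mem: "lambda_min A \<in> eigval ` B"
  unfolding lambda_min_eq using finite nonempty by (intro Min_in) auto

lemma quadratic_form_le_lambda_max: "x \<bullet> (A *v x) \<le> lambda_max A * (x \<bullet> x)"
  unfolding quadratic_form_expand inner_expand[of x x] sum_distrib_left
  by (rule sum_mono) (simp add: eigval_le_lambda_max mult_right_mono power2_eq_square)

lemma lambda_min_le_quadratic_form: "lambda_min A * (x \<bullet> x) \<le> x \<bullet> (A *v x)"
  unfolding quadratic_form_expand inner_expand[of x x] sum_distrib_left
  by (rule sum_mono) (simp add: lambda_min_le_eigval mult_right_mono power2_eq_square)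

lemma norm_mult_le_lambda_max:
  assumes "0 \<le> lambda_min A"
  shows "norm (A *v x) \<le> lambda_max A * norm x"
proof (rule power2_le_imp_le)
  have "(norm (A *v x))\<^sup>2 \<le> (\<Sum>v\<in>B. (lambda_max A)\<^sup>2 * (x \<bullet> v)\<^sup>2)"
    unfolding norm_mult_expand using assms
    by (intro sum_mono mult_right_mono power_mono)
      (auto intro: order_trans lambda_min_le_eigval eigval_le_lambda_max)
  then show "(norm (A *v x))\<^sup>2 \<le> (lambda_max A * norm x)\<^sup>2"
    by (simp add: norm_expand power_mult_distrib sum_distrib_left)
  have "0 \<le> lambda_max A"
    using assms lambda_min_mem eigval_le_lambda_max by force
  then show "0 \<le> lambda_max A * norm x" by simp
qed

lemma lambda_min_le_norm_mult:
  assumes "0 \<le> lambda_min A"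
  shows "lambda_min A * norm x \<le> norm (A *v x)"
proof (rule power2_le_imp_le)
  have "(\<Sum>v\<in>B. (lambda_min A)\<^sup>2 * (x \<bullet> v)\<^sup>2) \<le> (norm (A *v x))\<^sup>2"
    unfolding norm_mult_expand using assms
    by (intro sum_mono mult_right_mono power_mono) (auto intro: lambda_min_le_eigval)
  then show "(lambda_min A * norm x)\<^sup>2 \<le> (norm (A *v x))\<^sup>2"
    by (simp add: norm_expand power_mult_distrib sum_distrib_left)
qed simp

lemma zero_if_eigvals_zero:
  assumes "\<And>v. v \<in> B \<Longrightarrow> eigval v = 0"
  shows "A = 0"
  by (simp add: matrix_eq mult_expand assms)

lemma exists_pos_semidef_sqrt:
  assumes nonneg: "\<And>v. v \<in> B \<Longrightarrow> 0 \<le> eigval v"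
  shows "\<exists>M. pos_semidef M \<and> M ** M = A"
proof -
  define f where "f x = (\<Sum>v\<in>B. (sqrt (eigval v) * (x \<bullet> v)) *\<^sub>R v)" for x
  have "linear f" unfolding f_def
    by (rule linearI) (simp_all add: inner_add_left scaleR_sum_right sum.distrib algebra_simps)
  define M where "M = matrix f"
  have M: "M *v x = f x" for x
    unfolding M_def using matrix_vector_mul(2)[OF \<open>linear f\<close>] by metis
  have f_basis: "f x \<bullet> w = sqrt (eigval w) * (x \<bullet> w)" if "w \<in> B" for x w
    unfolding f_def using inner_sum[OF that] by (simp add: inner_commute)
  have "transpose M = M"
    by (rule symmetric_if_inner_symmetric)
      (simp add: M f_def inner_sum_left inner_sum_right inner_commute mult_ac)
  moreover have "x \<bullet> (M *v x) \<ge> 0" for x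
    unfolding M f_def inner_sum_right
    by (rule sum_nonneg) (auto simp: nonneg inner_commute mult.assoc intro!: mult_nonneg_nonneg)
  moreover have "M ** M = A"
  proof -
    have "(M ** M) *v x = A *v x" for x
    proof -
      have "(M ** M) *v x = (\<Sum>v\<in>B. (sqrt (eigval v) * (f x \<bullet> v)) *\<^sub>R v)"
        by (simp add: M f_def flip: matrix_vector_mul_assoc)
      also have "\<dots> = (\<Sum>v\<in>B. (eigval v * (x \<bullet> v)) *\<^sub>R v)"
        by (intro sum.cong) (simp_all add: f_basis nonneg mult.assoc[symmetric])
      finally show ?thesis by (simp add: mult_expand)
    qed
    then show ?thesis by (simp add: matrix_eq)
  qed
  ultimately show ?thesis unfolding pos_semidef_def by blast
qed

end

lemma symmetric_matrix_orthonormal_eigenbasis: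
  fixes A :: "real^'n^'n"
  assumes "transpose A = A"
  obtains B eigval where "orthonormal_eigenbasis A B eigval"
proof -
  obtain B where B: "pairwise orthogonal B" "\<forall>v\<in>B. norm v = 1 \<and> (\<exists>l. A *v v = l *\<^sub>R v)"
      "UNIV \<subseteq> span B"
    using symmetric_orthonormal_eigenvectors_span_invariant_subspace[OF assms, of UNIV] by auto
  then obtain eigval where "\<forall>v\<in>B. A *v v = eigval v *\<^sub>R v" by metis
  then have "orthonormal_eigenbasis A B eigval"
    using B by unfold_locales auto
  then show ?thesis by (rule that)
qed

section \<open>Extreme eigenvalues\<close>

lemma quadratic_form_le_lambda_max:
  fixes A :: "real^'n^'n"
  assumes "transpose A = A"
  shows "x \<bullet> (A *v x) \<le> lambda_max A * (x \<bullet> x)"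
  by (metis assms symmetric_matrix_orthonormal_eigenbasis
      orthonormal_eigenbasis.quadratic_form_le_lambda_max)

lemma lambda_min_le_quadratic_form:
  fixes A :: "real^'n^'n"
  assumes "transpose A = A"
  shows "lambda_min A * (x \<bullet> x) \<le> x \<bullet> (A *v x)"
  by (metis assms symmetric_matrix_orthonormal_eigenbasis
      orthonormal_eigenbasis.lambda_min_le_quadratic_form)

lemma lambda_min_le_lambda_max:
  fixes A :: "real^'n^'n"
  assumes "transpose A = A"
  shows "lambda_min A \<le> lambda_max A"
proof -
  obtain B eigval where "orthonormal_eigenbasis A B eigval"
    using symmetric_matrix_orthonormal_eigenbasis[OF assms] .
  then interpret orthonormal_eigenbasis A B eigval .
  show ?thesis
    using lambda_min_mem by (auto intro: order_trans lambda_min_le_eigval eigval_le_lambda_max)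
qed

lemma lambda_max_le:
  fixes A :: "real^'n^'n"
  assumes "transpose A = A" and "\<And>x. x \<bullet> (A *v x) \<le> c * (x \<bullet> x)"
  shows "lambda_max A \<le> c"
proof -
  obtain B eigval where "orthonormal_eigenbasis A B eigval"
    using symmetric_matrix_orthonormal_eigenbasis[OF assms(1)] .
  then interpret orthonormal_eigenbasis A B eigval .
  obtain v where "v \<in> B" "lambda_max A = eigval v" using lambda_max_mem by blast
  moreover have "v \<bullet> v = 1" using unit[OF \<open>v \<in> B\<close>] by (simp add: norm_eq_1)
  ultimately show ?thesis using assms(2)[of v] eigval_eq by simp
qed

lemma lambda_min_ge:
  fixes A :: "real^'n^'n"
  assumes "transpose A = A" and "\<And>x. c * (x \<bullet> x) \<le> x \<bullet> (A *v x)"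
  shows "c \<le> lambda_min A"
proof -
  obtain B eigval where "orthonormal_eigenbasis A B eigval"
    using symmetric_matrix_orthonormal_eigenbasis[OF assms(1)] .
  then interpret orthonormal_eigenbasis A B eigval .
  obtain v where "v \<in> B" "lambda_min A = eigval v" using lambda_min_mem by blast
  moreover have "v \<bullet> v = 1" using unit[OF \<open>v \<in> B\<close>] by (simp add: norm_eq_1)
  ultimately show ?thesis using assms(2)[of v] eigval_eq by simp
qed

lemma pos_def_lambda_min_pos:
  fixes A :: "real^'n^'n"
  assumes "pos_def A"
  shows "lambda_min A > 0"
proof -
  have "transpose A = A" using assms by (simp add: pos_def_def)
  then obtain B eigval where "orthonormal_eigenbasis A B eigval"
    by (rule symmetric_matrix_orthonormal_eigenbasis)
  then interpret orthonormal_eigenbasis A B eigval .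
  obtain v where "v \<in> B" "lambda_min A = eigval v" using lambda_min_mem by blast
  moreover have "v \<noteq> 0" using unit[OF \<open>v \<in> B\<close>] by auto
  ultimately show ?thesis using assms eigval_eq by (simp add: pos_def_def)
qed

lemma pos_def_norm_mult_bounds:
  fixes A :: "real^'n^'n"
  assumes "pos_def A"
  shows "lambda_min A * norm x \<le> norm (A *v x)" and "norm (A *v x) \<le> lambda_max A * norm x"
proof -
  have "transpose A = A" using assms by (simp add: pos_def_def)
  then obtain B eigval where "orthonormal_eigenbasis A B eigval"
    by (rule symmetric_matrix_orthonormal_eigenbasis)
  then interpret orthonormal_eigenbasis A B eigval .
  have "0 \<le> lambda_min A" using pos_def_lambda_min_pos[OF assms] by simp
  then show "lambda_min A * norm x \<le> norm (A *v x)" "norm (A *v x) \<le> lambda_max A * norm x"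
    by (rule lambda_min_le_norm_mult, rule norm_mult_le_lambda_max)
qed

section \<open>Positive semidefinite matrices and square roots\<close>

lemma pos_def_imp_pos_semidef: "pos_def A \<Longrightarrow> pos_semidef A"
  unfolding pos_def_def pos_semidef_def by (metis inner_zero_left less_eq_real_def)

lemma pos_semidef_add: "pos_semidef A \<Longrightarrow> pos_semidef B \<Longrightarrow> pos_semidef (A + B)"
  by (simp add: pos_semidef_def transpose_add matrix_vector_mult_add_rdistrib inner_add_right add_nonneg_nonneg)

lemma pos_def_add_scaled_identity:
  assumes "pos_semidef A" and "\<sigma> > 0"
  shows "pos_def (A + \<sigma> *\<^sub>R mat 1)"
  using assms
  by (auto simp: pos_def_def pos_semidef_def transpose_add transpose_scalar matrix_vector_mult_add_rdistrib
      inner_add_right scaleR_mat_one_mult intro: add_nonneg_pos)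

lemma gram_pos_semidef: "pos_semidef (J ** transpose J)"
proof -
  have "x \<bullet> ((J ** transpose J) *v x) = (transpose J *v x) \<bullet> (transpose J *v x)" for x
    by (metis dot_lmul_matrix matrix_vector_mul_assoc transpose_matrix_vector)
  then show ?thesis by (simp add: pos_semidef_def matrix_transpose_mul)
qed

lemma pos_def_invertible:
  assumes "pos_def A"
  shows "invertible A"
proof -
  have "x = 0" if "A *v x = 0" for x
    using assms that unfolding pos_def_def by (metis inner_zero_right less_irrefl)
  then show ?thesis using matrix_left_invertible_ker invertible_left_inverse by blast
qed

lemma pos_semidef_sqrt_exists:
  fixes A :: "real^'n^'n"
  assumes "pos_semidef A"
  shows "\<exists>M. pos_semidef M \<and> M ** M = A"
proof -
  have "transpose A = A" using assms by (simp add: pos_semidef_def)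
  then obtain B eigval where "orthonormal_eigenbasis A B eigval"
    by (rule symmetric_matrix_orthonormal_eigenbasis)
  then interpret orthonormal_eigenbasis A B eigval .
  show ?thesis
    using assms by (intro exists_pos_semidef_sqrt) (simp add: eigval_eq pos_semidef_def)
qed

lemma pos_semidef_sqrt_unique:
  fixes M N :: "real^'n^'n"
  assumes M: "pos_semidef M" and N: "pos_semidef N" and sq: "M ** M = N ** N"
  shows "M = N"
proof -
  have sym_M: "transpose M = M" and sym_N: "transpose N = N"
    using M N by (auto simp: pos_semidef_def)
  then have "transpose (M - N) = M - N" by (simp add: transpose_def vec_eq_iff)
  then obtain B eigval where "orthonormal_eigenbasis (M - N) B eigval"
    by (rule symmetric_matrix_orthonormal_eigenbasis)
  then interpret orthonormal_eigenbasis "M - N" B eigval .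
  \<comment> \<open>With d the eigenvalue of M - N at v: M v = N v + d v and |M v| = |N v| give
    d (d + 2 v N v) = 0, while v N v \<ge> 0 and v M v = v N v + d \<ge> 0; so d = 0.\<close>
  have "eigval v = 0" if "v \<in> B" for v
  proof -
    define d where "d = eigval v"
    have "v \<bullet> v = 1" using unit[OF that] by (simp add: norm_eq_1)
    have Mv: "M *v v = N *v v + d *\<^sub>R v"
      using eigen[OF that] by (simp add: d_def matrix_vector_mult_diff_rdistrib algebra_simps)
    have "(M *v v) \<bullet> (M *v v) = (N *v v) \<bullet> (N *v v)"
      by (metis inner_symmetric_matrix matrix_vector_mul_assoc sq sym_M sym_N)
    then have "d * (d + 2 * (v \<bullet> (N *v v))) = 0"
      using \<open>v \<bullet> v = 1\<close> unfolding Mv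
      by (simp add: inner_add_left inner_add_right inner_commute algebra_simps)
    moreover have "0 \<le> v \<bullet> (N *v v)" and "0 \<le> v \<bullet> (N *v v) + d"
      using M N \<open>v \<bullet> v = 1\<close> Mv by (auto simp: pos_semidef_def inner_add_right dest: spec[of _ v])
    ultimately show ?thesis unfolding d_def by (smt (verit) mult_eq_0_iff)
  qed
  then have "M - N = 0" by (rule zero_if_eigvals_zero)
  then show ?thesis by simp
qed

lemma mat_sqrt:
  assumes "pos_semidef A"
  shows "pos_semidef (mat_sqrt A)" and "mat_sqrt A ** mat_sqrt A = A"
proof -
  have "\<exists>!M. pos_semidef M \<and> M ** M = A"
    using pos_semidef_sqrt_exists[OF assms] pos_semidef_sqrt_unique by blast
  then have "pos_semidef (mat_sqrt A) \<and> mat_sqrt A ** mat_sqrt A = A"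
    unfolding mat_sqrt_def by (rule theI')
  then show "pos_semidef (mat_sqrt A)" "mat_sqrt A ** mat_sqrt A = A" by auto
qed

lemma inv_sqrt:
  assumes "pos_def A"
  shows "inv_sqrt A ** mat_sqrt A = mat 1" and "transpose (inv_sqrt A) = inv_sqrt A"
proof -
  note sqrt = mat_sqrt[OF pos_def_imp_pos_semidef[OF assms]]
  have "mat_sqrt A ** (mat_sqrt A ** matrix_inv A) = mat 1"
    using matrix_inv_right[OF pos_def_invertible[OF assms]] sqrt(2) by (simp add: matrix_mul_assoc)
  then have "invertible (mat_sqrt A)" using invertible_right_inverse by blast
  moreover have "transpose (mat_sqrt A) = mat_sqrt A" using sqrt(1) by (simp add: pos_semidef_def)
  ultimately show "inv_sqrt A ** mat_sqrt A = mat 1" "transpose (inv_sqrt A) = inv_sqrt A"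
    unfolding inv_sqrt_def by (simp_all add: matrix_inv_left symmetric_matrix_inv)
qed

lemma spec_norm_nonneg: "0 \<le> spec_norm A"
  unfolding spec_norm_def by (rule onorm_pos_le[OF matrix_vector_mul_bounded_linear])

lemma quadratic_form_le_relative_spec_norm:
  fixes K S :: "real^'n^'n"
  assumes "pos_def K"
  shows "x \<bullet> (S *v x) \<le> spec_norm (inv_sqrt K ** S ** inv_sqrt K) * (x \<bullet> (K *v x))"
proof -
  define R where "R = mat_sqrt K"
  define P where "P = inv_sqrt K ** S ** inv_sqrt K"
  define y where "y = R *v x"
  note sqrt = mat_sqrt[OF pos_def_imp_pos_semidef[OF assms], folded R_def]
  have "x = inv_sqrt K *v y"
    using inv_sqrt(1)[OF assms] by (simp add: y_def R_def matrix_vector_mul_assoc)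
  then have "x \<bullet> (S *v x) = y \<bullet> (P *v y)"
    by (metis P_def inner_symmetric_matrix inv_sqrt(2)[OF assms] matrix_vector_mul_assoc)
  also have "\<dots> \<le> norm y * (spec_norm P * norm y)"
    using norm_cauchy_schwarz[of y "P *v y"] onorm[OF matrix_vector_mul_bounded_linear, of P y]
    unfolding spec_norm_def by (meson mult_left_mono norm_ge_zero order_trans)
  also have "\<dots> = spec_norm P * (y \<bullet> y)" by (simp add: dot_square_norm power2_eq_square)
  also have "y \<bullet> y = x \<bullet> (K *v x)"
    using sqrt inner_symmetric_matrix[of R x "R *v x"]
    by (simp add: y_def pos_semidef_def matrix_vector_mul_assoc)
  finally show ?thesis unfolding P_def .
qed

section \<open>Residuals of kernel ridge regression\<close>

lemma residual_eq_norm_resolvent: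
  assumes "invertible (KS + \<sigma> *\<^sub>R mat 1)"
  shows "residual KS \<sigma> Y = \<sigma>\<^sup>2 * (norm (matrix_inv (KS + \<sigma> *\<^sub>R mat 1) *v Y))\<^sup>2"
proof -
  define u where "u = matrix_inv (KS + \<sigma> *\<^sub>R mat 1) *v Y"
  have "(KS + \<sigma> *\<^sub>R mat 1) *v u = Y"
    using matrix_inv_right[OF assms] by (simp add: u_def matrix_vector_mul_assoc)
  then have "Y - KS *v u = \<sigma> *\<^sub>R u"
    by (auto simp: matrix_vector_mult_add_rdistrib scaleR_mat_one_mult)
  then show ?thesis
    by (simp add: residual_def u_def power_mult_distrib flip: matrix_vector_mul_assoc)
qed

lemma residual_pos:
  assumes "pos_def (KS + \<sigma> *\<^sub>R mat 1)" and "\<sigma> \<noteq> 0" and "Y \<noteq> 0"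
  shows "0 < residual KS \<sigma> Y"
proof -
  have "(KS + \<sigma> *\<^sub>R mat 1) *v (matrix_inv (KS + \<sigma> *\<^sub>R mat 1) *v Y) = Y"
    using assms(1) by (simp add: matrix_vector_mul_assoc matrix_inv_right pos_def_invertible)
  then have "matrix_inv (KS + \<sigma> *\<^sub>R mat 1) *v Y \<noteq> 0" using assms(3) by auto
  then show ?thesis
    using assms(2) by (simp add: residual_eq_norm_resolvent pos_def_invertible[OF assms(1)])
qed

lemma sqrt_residual_ratio_le_eigenvalue_ratio:
  fixes KS1 KS2 :: "real^'n^'n"
  assumes pd1: "pos_def (KS1 + \<sigma> *\<^sub>R mat 1)" and pd2: "pos_def (KS2 + \<sigma> *\<^sub>R mat 1)"
    and "\<sigma> \<noteq> 0" "Y \<noteq> 0"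
  shows "sqrt (residual KS1 \<sigma> Y / residual KS2 \<sigma> Y)
    \<le> lambda_max (KS2 + \<sigma> *\<^sub>R mat 1) / lambda_min (KS1 + \<sigma> *\<^sub>R mat 1)"
proof -
  define A1 A2 where "A1 = KS1 + \<sigma> *\<^sub>R mat 1" and "A2 = KS2 + \<sigma> *\<^sub>R mat 1"
  define u1 u2 where "u1 = matrix_inv A1 *v Y" and "u2 = matrix_inv A2 *v Y"
  have "A1 *v u1 = Y" "A2 *v u2 = Y"
    using pd1 pd2 by (simp_all add: A1_def A2_def u1_def u2_def matrix_vector_mul_assoc
        matrix_inv_right pos_def_invertible)
  then have "0 < norm u2" using \<open>Y \<noteq> 0\<close> by auto
  have "sqrt (residual KS1 \<sigma> Y / residual KS2 \<sigma> Y) = norm u1 / norm u2"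
    using \<open>\<sigma> \<noteq> 0\<close> pd1 pd2
    by (simp add: residual_eq_norm_resolvent pos_def_invertible A1_def A2_def u1_def u2_def
        real_sqrt_divide real_sqrt_mult)
  also have "\<dots> \<le> lambda_max A2 / lambda_min A1"
  proof -
    have "lambda_min A1 * norm u1 \<le> norm Y" "norm Y \<le> lambda_max A2 * norm u2"
      using pos_def_norm_mult_bounds pd1 pd2 \<open>A1 *v u1 = Y\<close> \<open>A2 *v u2 = Y\<close>
      unfolding A1_def A2_def by metis+
    then have "norm u1 * lambda_min A1 \<le> lambda_max A2 * norm u2" by (simp add: mult.commute)
    then show ?thesis
      using pos_def_lambda_min_pos[OF pd1] \<open>0 < norm u2\<close> by (simp add: A1_def field_simps)
  qed
  finally show ?thesis unfolding A1_def A2_def .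
qed

lemma lambda_min_le_lambda_min_add:
  fixes A S :: "real^'n^'n"
  assumes "transpose A = A" and "pos_semidef S"
  shows "lambda_min A \<le> lambda_min (A + S)"
proof (rule lambda_min_ge)
  show "transpose (A + S) = A + S" using assms by (simp add: transpose_add pos_semidef_def)
  show "lambda_min A * (x \<bullet> x) \<le> x \<bullet> ((A + S) *v x)" for x
    using lambda_min_le_quadratic_form[OF assms(1), of x] assms(2)
    by (simp add: quadratic_form_add pos_semidef_def add_increasing2)
qed

lemma lambda_max_add_le_relative:
  fixes K S :: "real^'n^'n"
  assumes K: "pos_def K" and S: "pos_semidef S" and "\<sigma> > 0"
  shows "lambda_max (K + S + \<sigma> *\<^sub>R mat 1)
    \<le> (1 + spec_norm (inv_sqrt K ** S ** inv_sqrt K)) * lambda_max (K + \<sigma> *\<^sub>R mat 1)"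
proof -
  define \<eta> B where "\<eta> = spec_norm (inv_sqrt K ** S ** inv_sqrt K)" and "B = K + \<sigma> *\<^sub>R mat 1"
  have "0 \<le> \<eta>" unfolding \<eta>_def by (rule spec_norm_nonneg)
  have "pos_def (K + S + \<sigma> *\<^sub>R mat 1)" "pos_def B"
    using K S \<open>\<sigma> > 0\<close> by (simp_all add: B_def pos_def_add_scaled_identity pos_semidef_add
        pos_def_imp_pos_semidef)
  then have sym: "transpose (K + S + \<sigma> *\<^sub>R mat 1) = K + S + \<sigma> *\<^sub>R mat 1" "transpose B = B"
    by (simp_all add: pos_def_def)
  have "x \<bullet> ((K + S + \<sigma> *\<^sub>R mat 1) *v x) \<le> (1 + \<eta>) * lambda_max B * (x \<bullet> x)" for x
  proof -
    have qf: "x \<bullet> ((K + S + \<sigma> *\<^sub>R mat 1) *v x) = x \<bullet> (B *v x) + x \<bullet> (S *v x)"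
      "x \<bullet> (B *v x) = x \<bullet> (K *v x) + \<sigma> * (x \<bullet> x)"
      by (simp_all add: B_def quadratic_form_add scaleR_mat_one_mult)
    have "x \<bullet> (S *v x) \<le> \<eta> * (x \<bullet> (K *v x))"
      unfolding \<eta>_def by (rule quadratic_form_le_relative_spec_norm[OF K])
    also have "\<dots> \<le> \<eta> * (x \<bullet> (B *v x))"
      using \<open>0 \<le> \<eta>\<close> \<open>\<sigma> > 0\<close> by (intro mult_left_mono) (simp_all add: qf)
    finally have "x \<bullet> ((K + S + \<sigma> *\<^sub>R mat 1) *v x) \<le> (1 + \<eta>) * (x \<bullet> (B *v x))"
      unfolding qf(1) by (simp add: algebra_simps)
    also have "\<dots> \<le> (1 + \<eta>) * (lambda_max B * (x \<bullet> x))"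
      using \<open>0 \<le> \<eta>\<close> quadratic_form_le_lambda_max[OF sym(2)] by (intro mult_left_mono) simp_all
    finally show ?thesis by (simp add: mult.assoc)
  qed
  then show ?thesis unfolding \<eta>_def B_def by (rule lambda_max_le[OF sym(1)])
qed

lemma perturbed_eigenvalue_ratio_bound:
  fixes e1 e2 \<mu> m1 L1 L2 \<Lambda> c :: real
  assumes "0 \<le> e1" "e1 < 1" "0 \<le> e2" "e2 < 1" and "0 < \<mu>" "\<mu> \<le> m1" "m1 \<le> L1"
    and "0 < L2" "L2 \<le> (1 + e2) * \<Lambda>" "\<Lambda> \<le> c * \<mu>"
  shows "L2 / m1 \<le> c / (1 - e1)\<^sup>2 * (c / (1 - e2)\<^sup>2) * L1 / L2"
proof -
  define D where "D = (1 - e1) * (1 - e2)"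
  define q where "q = c / D"
  have "0 < D" using assms(2,4) by (simp add: D_def)
  have "0 < \<Lambda>"
  proof (rule ccontr)
    assume "\<not> 0 < \<Lambda>"
    then have "(1 + e2) * \<Lambda> \<le> 0" using assms(3) by (simp add: mult_nonneg_nonpos)
    then show False using assms(8,9) by linarith
  qed
  then have "0 < c * \<mu>" using assms(10) by linarith
  then have "0 \<le> c" using assms(5) by (auto simp: zero_less_mult_iff)
  \<comment> \<open>The factor 1 + e2 is absorbed by the denominator: (1 + e2) (1 - e1) (1 - e2) \<le> 1.\<close>
  have "(1 + e2) * D = (1 - e1) * (1 - e2\<^sup>2)" by (simp add: D_def power2_eq_square algebra_simps)
  also have "\<dots> \<le> 1" using assms(1-4) by (intro mult_le_one) (simp_all add: abs_square_le_1)
  finally have "(1 + e2) * D \<le> 1" .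
  then have "c * ((1 + e2) * D) \<le> c" using \<open>0 \<le> c\<close> by (simp add: mult_left_le)
  then have "(1 + e2) * c * D \<le> c" by (simp add: mult_ac)
  then have "(1 + e2) * c \<le> q" unfolding q_def using \<open>0 < D\<close> by (simp add: pos_le_divide_eq)
  have "(1 + e2) * \<Lambda> \<le> (1 + e2) * (c * \<mu>)" using assms(3,10) by (intro mult_left_mono) simp_all
  then have "L2 \<le> (1 + e2) * (c * \<mu>)" using assms(9) by linarith
  also have "\<dots> \<le> q * \<mu>"
    using \<open>(1 + e2) * c \<le> q\<close> assms(5) by (simp add: mult.assoc[symmetric] mult_right_mono)
  finally have "L2\<^sup>2 \<le> q\<^sup>2 * \<mu>\<^sup>2" using assms(8) by (simp add: power_mono flip: power_mult_distrib)
  also have "\<dots> \<le> q\<^sup>2 * (m1 * L1)"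
    using assms(5,6,7) by (intro mult_left_mono) (simp_all add: power2_eq_square mult_mono)
  finally have "L2\<^sup>2 \<le> q\<^sup>2 * (m1 * L1)" .
  have "L2 / m1 = L2\<^sup>2 / (m1 * L2)" using assms(8) by (simp add: power2_eq_square)
  also have "\<dots> \<le> q\<^sup>2 * (m1 * L1) / (m1 * L2)"
    using \<open>L2\<^sup>2 \<le> q\<^sup>2 * (m1 * L1)\<close> assms(5,6,8) by (intro divide_right_mono) simp_all
  also have "\<dots> = q\<^sup>2 * L1 / L2" using assms(5,6) by simp
  also have "q\<^sup>2 = c / (1 - e1)\<^sup>2 * (c / (1 - e2)\<^sup>2)"
    by (simp add: q_def D_def power2_eq_square)
  finally show ?thesis .
qed

lemma sqrt_residual_ratio_le:
  fixes K S1 S2 :: "real^'n^'n"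
  defines "\<eta>1 \<equiv> spec_norm (inv_sqrt K ** S1 ** inv_sqrt K)"
    and "\<eta>2 \<equiv> spec_norm (inv_sqrt K ** S2 ** inv_sqrt K)"
  assumes K: "pos_def K" and S1: "pos_semidef S1" and S2: "pos_semidef S2"
    and "\<sigma> > 0" "Y \<noteq> 0" "\<eta>1 < 1" "\<eta>2 < 1" "cond_num (K + \<sigma> *\<^sub>R mat 1) \<le> c"
  shows "sqrt (residual (K + S1) \<sigma> Y / residual (K + S2) \<sigma> Y)
    \<le> c / (1 - \<eta>1)\<^sup>2 * (c / (1 - \<eta>2)\<^sup>2)
      * lambda_max (K + S1 + \<sigma> *\<^sub>R mat 1) / lambda_max (K + S2 + \<sigma> *\<^sub>R mat 1)"
proof -
  define B A1 A2 where "B = K + \<sigma> *\<^sub>R mat 1"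
    and "A1 = K + S1 + \<sigma> *\<^sub>R mat 1" and "A2 = K + S2 + \<sigma> *\<^sub>R mat 1"
  have pd: "pos_def B" "pos_def A1" "pos_def A2"
    unfolding B_def A1_def A2_def using \<open>\<sigma> > 0\<close> K S1 S2
    by (simp_all add: pos_def_add_scaled_identity pos_semidef_add pos_def_imp_pos_semidef)
  have "sqrt (residual (K + S1) \<sigma> Y / residual (K + S2) \<sigma> Y) \<le> lambda_max A2 / lambda_min A1"
    using sqrt_residual_ratio_le_eigenvalue_ratio[OF pd(2,3)[unfolded A1_def A2_def]]
      \<open>\<sigma> > 0\<close> \<open>Y \<noteq> 0\<close>
    unfolding A1_def A2_def by simp
  also have "\<dots> \<le> c / (1 - \<eta>1)\<^sup>2 * (c / (1 - \<eta>2)\<^sup>2) * lambda_max A1 / lambda_max A2"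
  proof (rule perturbed_eigenvalue_ratio_bound)
    show "0 \<le> \<eta>1" "\<eta>1 < 1" "0 \<le> \<eta>2" "\<eta>2 < 1"
      using assms by (simp_all add: spec_norm_nonneg)
    show "0 < lambda_min B" using pd(1) by (rule pos_def_lambda_min_pos)
    show "lambda_min B \<le> lambda_min A1"
      using lambda_min_le_lambda_min_add[of B S1] pd(1) S1
      by (simp add: A1_def B_def pos_def_def add_ac)
    show "lambda_min A1 \<le> lambda_max A1"
      using pd(2) by (simp add: lambda_min_le_lambda_max pos_def_def)
    show "0 < lambda_max A2"
      using pos_def_lambda_min_pos[OF pd(3)] pd(3) lambda_min_le_lambda_max[of A2]
      by (simp add: pos_def_def)
    show "lambda_max A2 \<le> (1 + \<eta>2) * lambda_max B"
      unfolding A2_def B_def \<eta>2_def using K S2 \<open>\<sigma> > 0\<close> by (rule lambda_max_add_le_relative)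
    show "lambda_max B \<le> c * lambda_min B"
      using assms(10) pos_def_lambda_min_pos[OF pd(1)]
      by (simp add: B_def cond_num_def pos_divide_le_eq mult.commute)
  qed
  finally show ?thesis by (simp add: A1_def A2_def)
qed

theorem corollary1:
  fixes J :: "real^'p^'n" and J1 :: "real^'q1^'n" and J2 :: "real^'q2^'n"
    and K S1 S2 :: "real^'n^'n" and \<sigma> c :: real and Y :: "real^'n"
  assumes K_def: "K = J ** transpose J"
    and K_pd: "pos_def K"
    and S1_def: "S1 = J1 ** transpose J1"
    and S2_def: "S2 = J2 ** transpose J2"
    and sigma_pos: "\<sigma> > 0"
    and Y_nz: "Y \<noteq> 0"
    and eta1: "spec_norm (inv_sqrt K ** S1 ** inv_sqrt K) < 1"
    and eta2: "spec_norm (inv_sqrt K ** S2 ** inv_sqrt K) < 1"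
    and cond: "cond_num (K + \<sigma> *\<^sub>R mat 1) \<le> c"
  shows
    "let \<eta>1 = spec_norm (inv_sqrt K ** S1 ** inv_sqrt K);
         \<eta>2 = spec_norm (inv_sqrt K ** S2 ** inv_sqrt K);
         a1 = c / (1 - \<eta>1)\<^sup>2; a2 = c / (1 - \<eta>2)\<^sup>2; b = a1 * a2;
         R1 = residual (K + S1) \<sigma> Y; R2 = residual (K + S2) \<sigma> Y;
         L1 = lambda_max (K + S1 + \<sigma> *\<^sub>R mat 1);
         L2 = lambda_max (K + S2 + \<sigma> *\<^sub>R mat 1)
     in L1 / (b * L2) \<le> sqrt (R1 / R2) \<and> sqrt (R1 / R2) \<le> b * L1 / L2"
proof -
  have S: "pos_semidef S1" "pos_semidef S2" unfolding S1_def S2_def by (rule gram_pos_semidef)+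
  define s where "s = sqrt (residual (K + S1) \<sigma> Y / residual (K + S2) \<sigma> Y)"
  define a1 a2 where "a1 = c / (1 - spec_norm (inv_sqrt K ** S1 ** inv_sqrt K))\<^sup>2"
    and "a2 = c / (1 - spec_norm (inv_sqrt K ** S2 ** inv_sqrt K))\<^sup>2"
  define L1 L2 where "L1 = lambda_max (K + S1 + \<sigma> *\<^sub>R mat 1)"
    and "L2 = lambda_max (K + S2 + \<sigma> *\<^sub>R mat 1)"
  have "0 < s"
    using S K_pd sigma_pos Y_nz unfolding s_def
    by (simp add: residual_pos pos_def_add_scaled_identity pos_semidef_add pos_def_imp_pos_semidef)
  have upper: "s \<le> a1 * a2 * L1 / L2"
    using sqrt_residual_ratio_le[OF K_pd S sigma_pos Y_nz eta1 eta2 cond]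
    unfolding s_def a1_def a2_def L1_def L2_def .
  \<comment> \<open>the lower bound is the upper bound with the two candidate layers exchanged\<close>
  have "inverse s \<le> a1 * a2 * L2 / L1"
    using sqrt_residual_ratio_le[OF K_pd S(2,1) sigma_pos Y_nz eta2 eta1 cond]
    unfolding a1_def[symmetric] a2_def[symmetric] L1_def[symmetric] L2_def[symmetric]
    by (simp add: s_def real_sqrt_divide mult.commute[of a2 a1])
  then have "L1 / (a1 * a2 * L2) \<le> s"
    using le_imp_inverse_le \<open>0 < s\<close> by fastforce
  with upper show ?thesis
    unfolding Let_def
    unfolding s_def[symmetric] a1_def[symmetric] a2_def[symmetric] L1_def[symmetric] L2_def[symmetric]
    by simp
qed

end
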